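(* Let $k\ge1$, let $t_1\ge t_2\ge\cdots\ge t_k\ge 1$ be integers, set $t_{k+1}=0$ and $n=\sum_{i=1}^k t_i$, and let \[ A_0+\lambda E_0=\begin{bmatrix}\lambda E_{1,1} & A_{1,2} & & \\ & \ddots & \ddots & \\ & & \lambda E_{k-1,k-1} & A_{k-1,k}\\ & & & \lambda E_{k,k}\end{bmatrix}\in\mathbb{C}[\lambda]^{n\times n} \] be a block bidiagonal pencil with block rows and block columns of sizes $t_1,\dots,t_k$ (unmarked blocks zero), where $E_{i,i}\in\mathbb{C}^{t_i\times t_i}$ and $A_{i,i+1}=\begin{bmatrix}\hat A_{i,i+1}\\0\end{bmatrix}\in\mathbb{C}^{t_i\times t_{i+1}}$ with $\hat A_{i,i+1}\in\mathbb{C}^{t_{i+1}\times t_{i+1}}$, and both $\hat A_{i,i+1}$ and $E_{i,i}$ invertible upper triangular. Let $\hat Z_i:=-E_{i,i}^{-1}A_{i,i+1}\in\mathbb{C}^{t_i\times t_{i+1}}$ for $i=1,\dots,k-1$. For $j=1,\dots,k$ let $X_j(\lambda)\in\mathbb{C}[\lambda]^{n\times t_j}$ be the block vector whose $\ell$-th block ($\ell=1,\dots,j$) is $\lambda^{\ell-1}\hat Z_\ell\hat Z_{\ell+1}\cdots\hat Z_{j-1}$ (for $\ell=j$ this is $\lambda^{j-1}I_{t_j}$) and whose blocks $j+1,\dots,k$ are zero, and let $Q_j(\lambda):=X_j(\lambda)\,[e_{t_{j+1}+1}\ \cdots\ e_{t_j}]\in\mathbb{C}[\lambda]^{n\times(t_j-t_{j+1})}$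 consist of the rightmost $t_j-t_{j+1}$ columns of $X_j(\lambda)$ (here $e_p$ denotes the $p$-th standard basis vector of $\mathbb{C}^{t_j}$). Then the only eigenvalue of $A_0+\lambda E_0$ is $\lambda=0$, and the columns of $Q_k(\lambda),Q_{k-1}(\lambda),\dots,Q_1(\lambda)$ together form a maximal set of root polynomials at $0$ for $A_0+\lambda E_0$.
   Context: An eigenvalue of a pencil $P(\lambda)$ is $\mu\in\mathbb{C}$ with $\operatorname{rank}_{\mathbb{C}}P(\mu)$ smaller than its rank over $\mathbb{C}(\lambda)$. Let $N(\lambda)$ be a right minimal basis of $P$ (a polynomial basis of $\{x\in\mathbb{C}(\lambda)^n:Px=0\}$ with minimal sum of column degrees; empty if $P$ is regular). For $k\ge1$, a polynomial vector $x$ is a zero direction of order $k$ at $\lambda_0$ if $x(\lambda_0)\ne0$ and $P(\lambda)x(\lambda)=(\lambda-\lambda_0)^kw(\lambda)$ with $w$ polynomial, $w(\lambda_0)\ne0$; it is a root polynomial of order $k$ if moreover $[N(\lambda_0)\ x(\lambda_0)]$ has full column rank. Zero directions $r_1,\dots,r_s$ of orders $k_1,\dots,k_s$ are $\lambda_0$-independent if $[N(\lambda_0)\ r_1(\lambda_0)\cdots r_s(\lambda_0)]$ has full column rank; such a set is complete if no larger $\lambda_0$-independent set exists; it is ordered if $k_1\ge\cdots\ge k_s>0$; a complete ordered set is maximal if for no $j$ is there a root polynomial $\tilde r$ of order $k>k_j$ with $[N(\lambda_0)\ r_1(\lambda_0)\cdots r_{j-1}(\lambda_0)\ \tilde r(\lambda_0)]$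 of full column rank. (The columns of $Q_j$ have order $j$, so listing $Q_k,\dots,Q_1$ gives non-increasing orders.) *)

theory Defs
  imports "Jordan_Normal_Form.DL_Rank" "Jordan_Normal_Form.Gauss_Jordan_Elimination"
    "HOL-Computational_Algebra.Polynomial_Factorial"
begin

definition eval_mat :: "complex poly mat \<Rightarrow> complex \<Rightarrow> complex mat" where
  "eval_mat P \<mu> = map_mat (\<lambda>p. poly p \<mu>) P"

definition eval_vec :: "complex poly vec \<Rightarrow> complex \<Rightarrow> complex vec" where
  "eval_vec x \<mu> = map_vec (\<lambda>p. poly p \<mu>) x"

definition fract_mat :: "complex poly mat \<Rightarrow> complex poly fract mat" where
  "fract_mat P = map_mat to_fract P"

definition fract_vec :: "complex poly vec \<Rightarrow> complex poly fract vec" where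
  "fract_vec x = map_vec to_fract x"

definition rank_C :: "complex mat \<Rightarrow> nat" where
  "rank_C M = vec_space.rank (dim_row M) M"

definition rank_rat :: "complex poly mat \<Rightarrow> nat" where
  "rank_rat P = vec_space.rank (dim_row P) (fract_mat P)"

definition is_eigenvalue :: "complex poly mat \<Rightarrow> complex \<Rightarrow> bool" where
  "is_eigenvalue P \<mu> \<longleftrightarrow> rank_C (eval_mat P \<mu>) < rank_rat P"

definition full_col_rank :: "nat \<Rightarrow> complex vec list \<Rightarrow> bool" where
  "full_col_rank n cs \<longleftrightarrow> rank_C (mat_of_cols n cs) = length cs"

definition vec_degree :: "complex poly vec \<Rightarrow> nat" where
  "vec_degree x = Max (insert 0 (degree ` set\<^sub>v x))"

definition right_null_space :: "complex poly mat \<Rightarrow> complex poly fract vec set" where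
  "right_null_space P = {x \<in> carrier_vec (dim_col P). fract_mat P *\<^sub>v x = 0\<^sub>v (dim_row P)}"

definition is_poly_null_basis :: "complex poly mat \<Rightarrow> complex poly vec list \<Rightarrow> bool" where
  "is_poly_null_basis P N \<longleftrightarrow>
     (\<forall>x \<in> set N. x \<in> carrier_vec (dim_col P) \<and> fract_vec x \<in> right_null_space P) \<and>
     vec_space.rank (dim_col P) (mat_of_cols (dim_col P) (map fract_vec N)) = length N \<and>
     (\<forall>y \<in> right_null_space P. \<exists>c \<in> carrier_vec (length N).
         y = mat_of_cols (dim_col P) (map fract_vec N) *\<^sub>v c)"

definition is_right_minimal_basis :: "complex poly mat \<Rightarrow> complex poly vec list \<Rightarrow> bool" where
  "is_right_minimal_basis P N \<longleftrightarrow> is_poly_null_basis P N \<and>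
     (\<forall>N'. is_poly_null_basis P N' \<longrightarrow>
        (\<Sum>x\<leftarrow>N. vec_degree x) \<le> (\<Sum>x\<leftarrow>N'. vec_degree x))"

definition zero_direction :: "complex poly mat \<Rightarrow> complex \<Rightarrow> complex poly vec \<Rightarrow> nat \<Rightarrow> bool" where
  "zero_direction P z0 x k \<longleftrightarrow> k \<ge> 1 \<and> x \<in> carrier_vec (dim_col P) \<and>
     eval_vec x z0 \<noteq> 0\<^sub>v (dim_col P) \<and>
     (\<exists>w \<in> carrier_vec (dim_row P). P *\<^sub>v x = ([:-z0, 1:] ^ k) \<cdot>\<^sub>v w \<and>
        eval_vec w z0 \<noteq> 0\<^sub>v (dim_row P))"

definition root_polynomial ::
  "complex poly mat \<Rightarrow> complex poly vec list \<Rightarrow> complex \<Rightarrow> complex poly vec \<Rightarrow> nat \<Rightarrow> bool" where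
  "root_polynomial P N z0 x k \<longleftrightarrow> zero_direction P z0 x k \<and>
     full_col_rank (dim_col P) (map (\<lambda>v. eval_vec v z0) N @ [eval_vec x z0])"

definition indep_zero_dirs ::
  "complex poly mat \<Rightarrow> complex poly vec list \<Rightarrow> complex \<Rightarrow> (complex poly vec \<times> nat) list \<Rightarrow> bool" where
  "indep_zero_dirs P N z0 rs \<longleftrightarrow> (\<forall>(r, k) \<in> set rs. zero_direction P z0 r k) \<and>
     full_col_rank (dim_col P) (map (\<lambda>v. eval_vec v z0) (N @ map fst rs))"

definition complete_zero_dirs ::
  "complex poly mat \<Rightarrow> complex poly vec list \<Rightarrow> complex \<Rightarrow> (complex poly vec \<times> nat) list \<Rightarrow> bool" where
  "complete_zero_dirs P N z0 rs \<longleftrightarrow> indep_zero_dirs P N z0 rs \<and>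
     \<not> (\<exists>rs'. indep_zero_dirs P N z0 rs' \<and> length rs' > length rs)"

definition ordered_zero_dirs :: "(complex poly vec \<times> nat) list \<Rightarrow> bool" where
  "ordered_zero_dirs rs \<longleftrightarrow> sorted_wrt (\<ge>) (map snd rs) \<and> (\<forall>(r, k) \<in> set rs. k > 0)"

text \<open>Maximal set of root polynomials at lambda0 (positions j are 0-based here).\<close>
definition maximal_root_polys ::
  "complex poly mat \<Rightarrow> complex poly vec list \<Rightarrow> complex \<Rightarrow> (complex poly vec \<times> nat) list \<Rightarrow> bool" where
  "maximal_root_polys P N z0 rs \<longleftrightarrow> complete_zero_dirs P N z0 rs \<and> ordered_zero_dirs rs \<and>
     \<not> (\<exists>j < length rs. \<exists>r' k'. root_polynomial P N z0 r' k' \<and> k' > snd (rs ! j) \<and>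
          full_col_rank (dim_col P)
            (map (\<lambda>v. eval_vec v z0) (N @ map fst (take j rs) @ [r'])))"

text \<open>Block sizes t 1, ..., t k, with the convention t (k+1) = 0 (and 0 beyond).\<close>
definition tsz :: "(nat \<Rightarrow> nat) \<Rightarrow> nat \<Rightarrow> nat \<Rightarrow> nat" where
  "tsz t k i = (if 1 \<le> i \<and> i \<le> k then t i else 0)"

text \<open>Offset (0-based) of block i (1-based): t 1 + ... + t (i-1).\<close>
definition boff :: "(nat \<Rightarrow> nat) \<Rightarrow> nat \<Rightarrow> nat" where
  "boff t i = (\<Sum>l = 1..<i. t l)"

definition block_entry :: "nat \<Rightarrow> nat \<Rightarrow> 'a::zero mat \<Rightarrow> nat \<Rightarrow> nat \<Rightarrow> 'a" where
  "block_entry ro co B r c =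
     (if ro \<le> r \<and> r < ro + dim_row B \<and> co \<le> c \<and> c < co + dim_col B
      then B $$ (r - ro, c - co) else 0)"

definition Ablk :: "(nat \<Rightarrow> nat) \<Rightarrow> (nat \<Rightarrow> complex mat) \<Rightarrow> nat \<Rightarrow> complex mat" where
  "Ablk t Ahat i = mat (t i) (t (Suc i))
     (\<lambda>(r, c). if r < t (Suc i) then Ahat i $$ (r, c) else 0)"

definition A0 :: "(nat \<Rightarrow> nat) \<Rightarrow> nat \<Rightarrow> (nat \<Rightarrow> complex mat) \<Rightarrow> complex mat" where
  "A0 t k Ahat = mat (\<Sum>i = 1..k. t i) (\<Sum>i = 1..k. t i)
     (\<lambda>(r, c). \<Sum>i = 1..<k. block_entry (boff t i) (boff t (Suc i)) (Ablk t Ahat i) r c)"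

definition E0 :: "(nat \<Rightarrow> nat) \<Rightarrow> nat \<Rightarrow> (nat \<Rightarrow> complex mat) \<Rightarrow> complex mat" where
  "E0 t k E = mat (\<Sum>i = 1..k. t i) (\<Sum>i = 1..k. t i)
     (\<lambda>(r, c). \<Sum>i = 1..k. block_entry (boff t i) (boff t i) (E i) r c)"

definition pencil :: "complex mat \<Rightarrow> complex mat \<Rightarrow> complex poly mat" where
  "pencil A E = mat (dim_row A) (dim_col A) (\<lambda>(r, c). [:A $$ (r, c), E $$ (r, c):])"

definition Zhat :: "(nat \<Rightarrow> nat) \<Rightarrow> (nat \<Rightarrow> complex mat) \<Rightarrow> (nat \<Rightarrow> complex mat) \<Rightarrow> nat \<Rightarrow> complex mat" where
  "Zhat t E Ahat i = - (the (mat_inverse (E i)) * Ablk t Ahat i)"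

definition Zprod :: "(nat \<Rightarrow> nat) \<Rightarrow> (nat \<Rightarrow> complex mat) \<Rightarrow> (nat \<Rightarrow> complex mat) \<Rightarrow> nat \<Rightarrow> nat \<Rightarrow> complex mat" where
  "Zprod t E Ahat l j = foldr (\<lambda>i M. Zhat t E Ahat i * M) [l..<j] (1\<^sub>m (t j))"

definition Xmat :: "(nat \<Rightarrow> nat) \<Rightarrow> nat \<Rightarrow> (nat \<Rightarrow> complex mat) \<Rightarrow> (nat \<Rightarrow> complex mat) \<Rightarrow> nat \<Rightarrow> complex poly mat" where
  "Xmat t k E Ahat j = mat (\<Sum>i = 1..k. t i) (t j)
     (\<lambda>(r, c). \<Sum>l = 1..j. block_entry (boff t l) 0
                  (map_mat (\<lambda>a. monom a (l - 1)) (Zprod t E Ahat l j)) r c)"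

definition Qcols :: "(nat \<Rightarrow> nat) \<Rightarrow> nat \<Rightarrow> (nat \<Rightarrow> complex mat) \<Rightarrow> (nat \<Rightarrow> complex mat) \<Rightarrow> nat
    \<Rightarrow> (complex poly vec \<times> nat) list" where
  "Qcols t k E Ahat j = map (\<lambda>p. (col (Xmat t k E Ahat j) p, j)) [tsz t k (Suc j)..<t j]"

definition all_Qcols :: "(nat \<Rightarrow> nat) \<Rightarrow> nat \<Rightarrow> (nat \<Rightarrow> complex mat) \<Rightarrow> (nat \<Rightarrow> complex mat)
    \<Rightarrow> (complex poly vec \<times> nat) list" where
  "all_Qcols t k E Ahat = concat (map (Qcols t k E Ahat) (rev [1..<Suc k]))"

end

theory Submission
  imports Defs
begin

(* The pencil P is upper triangular with diagonal entries lambda * (E_0)_rr, so det P is a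
   nonzero multiple of lambda^n: P is regular, its right minimal basis is empty, and 0 is its
   only eigenvalue.

   Write a zero direction of order m as x = sum_s lambda^s x_s and split x_s into blocks
   x_s^(i). Comparing the coefficients of lambda^s, s < m, in P x = lambda^m w block row by
   block row gives A_{i,i+1} x_0^(i+1) = 0 and E_i x_{s-1}^(i) + A_{i,i+1} x_s^(i+1) = 0.
   As A_{i,i+1} has full column rank, x(0) = x_0 is supported in the first block, where it
   equals Z_1 ... Z_{m-1} x_{m-1}^(m) (it is 0 if m > k, by the last block row). Each Z_i is
   upper trapezoidal with nonzero diagonal, hence x(0) vanishes beyond its first t_m entries.
   The same recursion shows P X_j = lambda^j [0; ...; E_j; ...; 0].

   The values at 0 of the columns of Q_k, ..., Q_1 are, in this order, the columns of an upper
   triangular t_1 x t_1 matrix with nonzero diagonal, padded by zeros: they are independent,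
   there is no room for more than t_1 independent values (completeness), and a root
   polynomial of order larger than that of the j-th column has its value at 0 in the span of
   the first j coordinates, which the first j columns already fill (maximality). *)

lemma (in vec_space) mult_vec_eq_0_if_rank_eq_dim_col:
  assumes A: "A \<in> carrier_mat n nc" and r: "rank A = nc"
    and v: "v \<in> carrier_vec nc" and Av: "A *\<^sub>v v = 0\<^sub>v n"
  shows "v = 0\<^sub>v nc"
proof (cases "distinct (cols A)")
  case True
  then have "lin_indpt (set (cols A))" using full_rank_lin_indpt[OF A r] by auto
  then show ?thesis using lin_depI[OF A v _ Av True] by auto
next
  case False
  obtain S where S: "maximal S (\<lambda>T. T \<subseteq> set (cols A) \<and> lin_indpt T)"
    using maximal_exists[of "\<lambda>T. T \<subseteq> set (cols A) \<and> lin_indpt T" "card (set (cols A))" "{}"]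
    by (meson List.finite_set card_mono empty_iff empty_subsetI finite_lin_indpt2 rev_finite_subset)
  then have "card S \<le> card (set (cols A))" by (simp add: card_mono maximal_def)
  also have "card (set (cols A)) < nc"
    using False A by (metis card_distinct card_length cols_length carrier_matD(2) order_le_neq_trans)
  finally show ?thesis using rank_card_indpt[OF A S] r by simp
qed

lemma (in vec_space) rank_eq_dim_col_if_kernel_trivial:
  assumes A: "A \<in> carrier_mat n nc"
    and ker: "\<And>v. v \<in> carrier_vec nc \<Longrightarrow> A *\<^sub>v v = 0\<^sub>v n \<Longrightarrow> v = 0\<^sub>v nc"
  shows "rank A = nc"
proof -
  have col: "A *\<^sub>v unit_vec nc i = col A i" if "i < nc" for i
    using A that by (intro eq_vecI) (auto simp: mult_mat_vec_def)
  have dist: "distinct (cols A)"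
  proof (rule ccontr)
    assume "\<not> distinct (cols A)"
    then obtain i j where ij: "i \<noteq> j" "i < nc" "j < nc" "col A i = col A j"
      using A by (auto simp: distinct_conv_nth)
    define v :: "'a vec" where "v = unit_vec nc i - unit_vec nc j"
    have "A *\<^sub>v v = col A i - col A j"
      using A ij by (simp add: v_def mult_minus_distrib_mat_vec col)
    then have "v = 0\<^sub>v nc" using ker ij(4) A by (auto simp: v_def)
    then show False using ij by (metis index_minus_vec(1) index_unit_vec(1,3) index_zero_vec(1)
        right_minus_eq zero_neq_one v_def)
  qed
  have "lin_indpt (set (cols A))"
  proof
    assume "lin_dep (set (cols A))"
    from lin_depE[OF A this dist] ker show False by blast
  qed
  then show "rank A = nc" using lin_indpt_full_rank[OF A dist] by metis
qed

lemma full_col_rank_iff: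
  assumes "set cs \<subseteq> carrier_vec n"
  shows "full_col_rank n cs \<longleftrightarrow>
    (\<forall>v \<in> carrier_vec (length cs). mat_of_cols n cs *\<^sub>v v = 0\<^sub>v n \<longrightarrow> v = 0\<^sub>v (length cs))"
proof -
  have M: "mat_of_cols n cs \<in> carrier_mat n (length cs)" by simp
  have r: "rank_C (mat_of_cols n cs) = vec_space.rank n (mat_of_cols n cs)"
    by (simp add: rank_C_def)
  show ?thesis
    unfolding full_col_rank_def r
    using vec_space.mult_vec_eq_0_if_rank_eq_dim_col[OF M]
      vec_space.rank_eq_dim_col_if_kernel_trivial[OF M] by blast
qed

lemma mat_of_cols_mult_vec_index:
  assumes "set cs \<subseteq> carrier_vec n" "v \<in> carrier_vec (length cs)" "r < n"
  shows "(mat_of_cols n cs *\<^sub>v v) $ r = (\<Sum>q<length cs. cs ! q $ r * v $ q)"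
  using assms by (simp add: scalar_prod_def mat_of_cols_def atLeast0LessThan)

lemma not_full_col_rank_if_supported:
  assumes cs: "set cs \<subseteq> carrier_vec n" and m: "m < length cs"
    and supp: "\<And>c r. c \<in> set cs \<Longrightarrow> m \<le> r \<Longrightarrow> r < n \<Longrightarrow> c $ r = 0"
  shows "\<not> full_col_rank n cs"
proof
  assume full: "full_col_rank n cs"
  define L where "L = length cs"
  define M where "M = mat\<^sub>r L L (\<lambda>i. if i = L - 1 then 0\<^sub>v L
    else vec L (\<lambda>q. if i < n then cs ! q $ i else 0))"
  have Mc: "M \<in> carrier_mat L L" unfolding M_def by simp
  have "det M = 0" unfolding M_def using m by (intro det_row_0) (auto simp: L_def)
  then obtain v where v: "v \<in> carrier_vec L" "v \<noteq> 0\<^sub>v L" "M *\<^sub>v v = 0\<^sub>v L"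
    using det_0_iff_vec_prod_zero_field[OF Mc] by auto
  have "mat_of_cols n cs *\<^sub>v v = 0\<^sub>v n"
  proof (rule eq_vecI)
    fix r assume "r < dim_vec (0\<^sub>v n :: complex vec)"
    then have r: "r < n" by simp
    have "(mat_of_cols n cs *\<^sub>v v) $ r = (\<Sum>q<L. cs ! q $ r * v $ q)"
      using mat_of_cols_mult_vec_index[OF cs _ r] v(1) by (simp add: L_def)
    also have "\<dots> = 0"
    proof (cases "r < m")
      case True
      then have "r < L" "r \<noteq> L - 1" using m by (auto simp: L_def)
      then have "(M *\<^sub>v v) $ r = (\<Sum>q<L. cs ! q $ r * v $ q)"
        using v(1) r by (simp add: M_def scalar_prod_def atLeast0LessThan)
      then show ?thesis using v(3) \<open>r < L\<close> by simp
    next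
      case False
      then show ?thesis using supp r by (auto intro!: sum.neutral simp: L_def)
    qed
    finally show "(mat_of_cols n cs *\<^sub>v v) $ r = 0\<^sub>v n $ r" using r by simp
  qed simp
  then show False using full v unfolding full_col_rank_iff[OF cs] by (auto simp: L_def)
qed

lemma full_col_rank_if_echelon:
  assumes cs: "set cs \<subseteq> carrier_vec n" and L: "length cs \<le> n"
    and below: "\<And>q r. q < length cs \<Longrightarrow> q < r \<Longrightarrow> r < n \<Longrightarrow> cs ! q $ r = 0"
    and diag: "\<And>q. q < length cs \<Longrightarrow> cs ! q $ q \<noteq> 0"
  shows "full_col_rank n cs"
  unfolding full_col_rank_iff[OF cs]
proof (intro ballI impI)
  define U where "U = mat (length cs) (length cs) (\<lambda>(r, q). cs ! q $ r)"
  have Uc: "U \<in> carrier_mat (length cs) (length cs)" unfolding U_def by simp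
  have "upper_triangular U" using below L by (auto simp: U_def)
  moreover have "0 \<notin> set (diag_mat U)" using diag by (auto simp: U_def diag_mat_def)
  ultimately have "det U \<noteq> 0" using upper_triangular_imp_det_eq_0_iff[OF Uc] by simp
  fix v assume v: "v \<in> carrier_vec (length cs)" and Mv: "mat_of_cols n cs *\<^sub>v v = 0\<^sub>v n"
  have "U *\<^sub>v v = 0\<^sub>v (length cs)"
  proof (rule eq_vecI)
    fix r assume "r < dim_vec (0\<^sub>v (length cs) :: complex vec)"
    then have r: "r < length cs" "r < n" using L by auto
    have "(U *\<^sub>v v) $ r = (mat_of_cols n cs *\<^sub>v v) $ r"
      using mat_of_cols_mult_vec_index[OF cs v r(2)] v r
      by (simp add: U_def scalar_prod_def atLeast0LessThan)
    then show "(U *\<^sub>v v) $ r = 0\<^sub>v (length cs) $ r" using Mv r by simp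
  qed (simp add: U_def)
  then show "v = 0\<^sub>v (length cs)"
    using det_0_iff_vec_prod_zero_field[OF Uc] \<open>det U \<noteq> 0\<close> v by auto
qed

definition upper_trapezoidal :: "'a::zero mat \<Rightarrow> bool" where
  "upper_trapezoidal A \<longleftrightarrow> (\<forall>i < dim_row A. \<forall>j < dim_col A. j < i \<longrightarrow> A $$ (i, j) = 0)"

lemma upper_trapezoidalD:
  "upper_trapezoidal A \<Longrightarrow> j < i \<Longrightarrow> i < dim_row A \<Longrightarrow> j < dim_col A \<Longrightarrow> A $$ (i, j) = 0"
  unfolding upper_trapezoidal_def by blast

lemma upper_trapezoidal_one: "upper_trapezoidal (1\<^sub>m n)"
  unfolding upper_trapezoidal_def by simp

lemma upper_triangular_imp_upper_trapezoidal: "upper_triangular A \<Longrightarrow> upper_trapezoidal A"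
  unfolding upper_trapezoidal_def upper_triangular_def by blast

lemma upper_trapezoidal_mult:
  fixes A B :: "'a::comm_semiring_0 mat"
  assumes A: "A \<in> carrier_mat na nb" and B: "B \<in> carrier_mat nb nc"
    and "upper_trapezoidal A" "upper_trapezoidal B"
  shows "upper_trapezoidal (A * B)"
  unfolding upper_trapezoidal_def
proof (intro allI impI)
  fix i j assume ij: "i < dim_row (A * B)" "j < dim_col (A * B)" "j < i"
  have "A $$ (i, l) * B $$ (l, j) = 0" if "l < nb" for l
    using assms ij that by (cases "l < i") (auto simp: upper_trapezoidal_def)
  then show "(A * B) $$ (i, j) = 0"
    using A B ij by (simp add: scalar_prod_def)
qed

lemma upper_trapezoidal_mult_diag:
  fixes A B :: "'a::comm_semiring_0 mat"
  assumes A: "A \<in> carrier_mat na nb" and B: "B \<in> carrier_mat nb nc"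
    and "upper_trapezoidal A" "upper_trapezoidal B"
    and p: "p < na" "p < nb" "p < nc"
  shows "(A * B) $$ (p, p) = A $$ (p, p) * B $$ (p, p)"
proof -
  have "A $$ (p, l) * B $$ (l, p) = 0" if "l < nb" "l \<noteq> p" for l
    using assms that by (cases "l < p") (auto simp: upper_trapezoidal_def)
  then have "(\<Sum>l\<in>{0..<nb}. A $$ (p, l) * B $$ (l, p)) = A $$ (p, p) * B $$ (p, p)"
    using p by (simp add: sum.remove[of _ p] sum.neutral)
  then show ?thesis using A B p by (simp add: scalar_prod_def)
qed

lemma upper_trapezoidal_right_factor:
  fixes U :: "'a::field mat"
  assumes U: "U \<in> carrier_mat m m" and "upper_triangular U"
    and diag: "\<And>i. i < m \<Longrightarrow> U $$ (i, i) \<noteq> 0"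
    and Z: "Z \<in> carrier_mat m nc" and UZ: "upper_trapezoidal (U * Z)"
  shows "upper_trapezoidal Z"
  unfolding upper_trapezoidal_def
proof (intro allI impI)
  fix i j assume i: "i < dim_row Z" and j: "j < dim_col Z" "j < i"
  show "Z $$ (i, j) = 0" using i j(2)
  proof (induction "m - i" arbitrary: i rule: less_induct)
    case less
    have im: "i < m" and ji: "j < i" using less.prems Z by auto
    have "U $$ (i, l) * Z $$ (l, j) = 0" if "l < m" "l \<noteq> i" for l
    proof (cases "l < i")
      case True then show ?thesis using assms im by (auto simp: upper_triangular_def)
    next
      case False
      then have "Z $$ (l, j) = 0" using that Z ji by (intro less.hyps) auto
      then show ?thesis by simp
    qed
    then have "(U * Z) $$ (i, j) = U $$ (i, i) * Z $$ (i, j)"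
      using U Z im j by (simp add: scalar_prod_def sum.remove[of _ i] sum.neutral)
    moreover have "(U * Z) $$ (i, j) = 0" using UZ U Z im j ji by (auto simp: upper_trapezoidal_def)
    ultimately show "Z $$ (i, j) = 0" using diag[OF im] by simp
  qed
qed

lemma invertible_mat_det_ne_0:
  fixes A :: "'a::field mat"
  assumes A: "A \<in> carrier_mat m m" and "invertible_mat A"
  shows "det A \<noteq> 0"
proof -
  obtain B where B: "A * B = 1\<^sub>m m" "B * A = 1\<^sub>m (dim_row B)"
    using assms unfolding invertible_mat_def inverts_mat_def by auto
  have "B \<in> carrier_mat m m"
    using arg_cong[OF B(1), of dim_col] arg_cong[OF B(2), of dim_col] A by auto
  then have "det A * det B = 1" using det_mult[OF A] B(1) det_one by metis
  then show ?thesis by auto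
qed

lemma invertible_upper_triangular_diag_ne_0:
  fixes A :: "'a::field mat"
  assumes A: "A \<in> carrier_mat m m" and "upper_triangular A" "invertible_mat A" and i: "i < m"
  shows "A $$ (i, i) \<noteq> 0"
  using invertible_mat_det_ne_0[OF A] upper_triangular_imp_det_eq_0_iff[OF A] assms
  by (auto simp: diag_mat_def)

lemma invertible_mat_mult_vec_eq_0:
  fixes A :: "'a::field mat"
  assumes A: "A \<in> carrier_mat m m" and "invertible_mat A"
    and y: "y \<in> carrier_vec m" and "A *\<^sub>v y = 0\<^sub>v m"
  shows "y = 0\<^sub>v m"
  using invertible_mat_det_ne_0[OF A] det_0_iff_vec_prod_zero_field[OF A] assms by auto

lemma mat_inverse_invertible:
  fixes A :: "'a::field mat"
  assumes A: "A \<in> carrier_mat m m" and "invertible_mat A"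
  shows "the (mat_inverse A) \<in> carrier_mat m m" "the (mat_inverse A) * A = 1\<^sub>m m"
    "A * the (mat_inverse A) = 1\<^sub>m m"
proof -
  have "A \<in> Units (ring_mat TYPE('a) m ())"
    using det_non_zero_imp_unit[OF A invertible_mat_det_ne_0[OF assms]] .
  then obtain B where "mat_inverse A = Some B" using mat_inverse(1)[OF A] by fastforce
  then show "the (mat_inverse A) \<in> carrier_mat m m" "the (mat_inverse A) * A = 1\<^sub>m m"
    "A * the (mat_inverse A) = 1\<^sub>m m"
    using mat_inverse(2)[OF A] by auto
qed

lemma boff_1 [simp]: "boff t (Suc 0) = 0"
  unfolding boff_def by simp

lemma boff_Suc: "1 \<le> i \<Longrightarrow> boff t (Suc i) = boff t i + t i"
  unfolding boff_def by (simp add: sum.atLeastLessThan_Suc)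

lemma boff_mono: "i \<le> j \<Longrightarrow> boff t i \<le> boff t j"
  unfolding boff_def by (intro sum_mono2) auto

lemma boff_add_le: "1 \<le> i \<Longrightarrow> i < j \<Longrightarrow> boff t i + t i \<le> boff t j"
  using boff_Suc[of i t] boff_mono[of "Suc i" j t] by simp

lemma boff_Suc_eq_sum: "boff t (Suc K) = (\<Sum>i = 1..K. t i)"
  unfolding boff_def by (simp add: atLeastLessThanSuc_atLeastAtMost)

lemma block_position_unique:
  assumes "1 \<le> l" "1 \<le> i" "a < t i" "boff t l \<le> boff t i + a" "boff t i + a < boff t l + t l"
  shows "l = i"
  using boff_add_le[of l i t] boff_add_le[of i l t] assms by (cases l i rule: linorder_cases) auto

lemma block_position_exists:
  assumes "r < boff t (Suc K)"
  obtains i a where "1 \<le> i" "i \<le> K" "a < t i" "r = boff t i + a"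
proof -
  have "\<exists>i a. 1 \<le> i \<and> i \<le> K \<and> a < t i \<and> r = boff t i + a"
    using assms
  proof (induction K)
    case (Suc K)
    show ?case
    proof (cases "r < boff t (Suc K)")
      case True then show ?thesis using Suc.IH by (meson le_SucI)
    next
      case False
      then show ?thesis using Suc.prems boff_Suc[of "Suc K" t]
        by (intro exI[of _ "Suc K"] exI[of _ "r - boff t (Suc K)"]) auto
    qed
  qed simp
  then show ?thesis using that by blast
qed

lemma block_entry_block_row:
  assumes "dim_row B = t i" "a < t i"
  shows "block_entry (boff t i) co B (boff t i + a) c
       = (if co \<le> c \<and> c < co + dim_col B then B $$ (a, c - co) else 0)"
  using assms unfolding block_entry_def by auto

lemma sum_block_entry_block_row:
  fixes B :: "nat \<Rightarrow> 'a::comm_monoid_add mat"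
  assumes S: "finite S" "\<And>l. l \<in> S \<Longrightarrow> 1 \<le> l" "\<And>l. l \<in> S \<Longrightarrow> dim_row (B l) = t l"
    and i: "1 \<le> i" "a < t i"
  shows "(\<Sum>l\<in>S. block_entry (boff t l) (co l) (B l) (boff t i + a) c)
       = (if i \<in> S then block_entry (boff t i) (co i) (B i) (boff t i + a) c else 0)"
proof -
  have "block_entry (boff t l) (co l) (B l) (boff t i + a) c = 0" if "l \<in> S" "l \<noteq> i" for l
    using block_position_unique[of l i a t] that S i unfolding block_entry_def by auto
  then show ?thesis using S(1) by (auto simp: sum.remove intro!: sum.neutral)
qed

lemma sum_window_mult:
  fixes f g :: "nat \<Rightarrow> 'a::comm_semiring_1"
  assumes "co + w \<le> N"
  shows "(\<Sum>c<N. (if co \<le> c \<and> c < co + w then f (c - co) else 0) * g c) = (\<Sum>q<w. f q * g (co + q))"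
proof -
  have "(\<Sum>c<N. (if co \<le> c \<and> c < co + w then f (c - co) else 0) * g c)
      = (\<Sum>c\<in>{co..<co + w}. f (c - co) * g c)"
    using assms by (intro sum.mono_neutral_cong_right) auto
  also have "\<dots> = (\<Sum>q<w. f q * g (co + q))"
    by (simp add: sum.atLeastLessThan_shift_0 atLeast0LessThan)
  finally show ?thesis .
qed

definition coeff_vec :: "'a::zero poly vec \<Rightarrow> nat \<Rightarrow> 'a vec" where
  "coeff_vec x s = vec (dim_vec x) (\<lambda>c. coeff (x $ c) s)"

lemma coeff_vec_carrier [simp]: "x \<in> carrier_vec m \<Longrightarrow> coeff_vec x s \<in> carrier_vec m"
  and dim_coeff_vec [simp]: "dim_vec (coeff_vec x s) = dim_vec x"
  and index_coeff_vec [simp]: "c < dim_vec x \<Longrightarrow> coeff_vec x s $ c = coeff (x $ c) s"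
  unfolding coeff_vec_def by auto

lemma eval_vec_0: "eval_vec x 0 = coeff_vec x 0"
  unfolding eval_vec_def coeff_vec_def by (intro eq_vecI) (auto simp: poly_0_coeff_0)

lemma eval_vec_carrier [simp]: "x \<in> carrier_vec m \<Longrightarrow> eval_vec x z \<in> carrier_vec m"
  unfolding eval_vec_def by simp

lemma coeff_x_power_mult:
  fixes q :: "'a::comm_ring_1 poly"
  shows "coeff ([:0, 1:] ^ j * q) s = (if s < j then 0 else coeff q (s - j))"
  using coeff_monom_mult[of 1 j q s] by (simp add: monom_altdef)

lemma dim_pencil [simp]: "dim_row (pencil A E) = dim_row A" "dim_col (pencil A E) = dim_col A"
  unfolding pencil_def by auto

lemma coeff_pencil_mult_vec:
  assumes A: "A \<in> carrier_mat m m" and E: "E \<in> carrier_mat m m" and x: "x \<in> carrier_vec m"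
    and r: "r < m"
  shows "coeff ((pencil A E *\<^sub>v x) $ r) s =
     (A *\<^sub>v coeff_vec x s) $ r + (if s = 0 then 0 else (E *\<^sub>v coeff_vec x (s - 1)) $ r)"
proof -
  have lin: "coeff ([:a, e:] * p) s = a * coeff p s + (if s = 0 then 0 else e * coeff p (s - 1))"
    for a e :: complex and p
    by (cases s) auto
  have "(pencil A E *\<^sub>v x) $ r = (\<Sum>c\<in>{0..<m}. [:A $$ (r, c), E $$ (r, c):] * x $ c)"
    using A x r by (simp add: scalar_prod_def pencil_def)
  then have "coeff ((pencil A E *\<^sub>v x) $ r) s = (\<Sum>c\<in>{0..<m}. A $$ (r, c) * coeff (x $ c) s
      + (if s = 0 then 0 else E $$ (r, c) * coeff (x $ c) (s - 1)))"
    by (simp only: coeff_sum lin)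
  then show ?thesis
    using A E x r by (simp add: sum.distrib scalar_prod_def)
qed

lemma poly_null_basis_Nil_if_det_ne_0:
  assumes P: "P \<in> carrier_mat m m" and det: "det (fract_mat P) \<noteq> 0"
    and N: "is_poly_null_basis P N"
  shows "N = []"
proof -
  let ?m = "dim_col P"
  have FP: "fract_mat P \<in> carrier_mat ?m ?m" using P by (simp add: fract_mat_def)
  have zero: "fract_vec x = 0\<^sub>v ?m" if "x \<in> set N" for x
  proof -
    have "fract_vec x \<in> carrier_vec ?m" "fract_mat P *\<^sub>v fract_vec x = 0\<^sub>v ?m"
      using N that P by (auto simp: is_poly_null_basis_def right_null_space_def)
    then show ?thesis using det_0_iff_vec_prod_zero_field[OF FP] det by blast
  qed
  have "mat_of_cols ?m (map fract_vec N) = 0\<^sub>m ?m (length N)"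
  proof (rule eq_matI)
    fix i j assume "i < dim_row (0\<^sub>m ?m (length N) :: complex poly fract mat)"
      "j < dim_col (0\<^sub>m ?m (length N) :: complex poly fract mat)"
    then show "mat_of_cols ?m (map fract_vec N) $$ (i, j) = 0\<^sub>m ?m (length N) $$ (i, j)"
      using zero[OF nth_mem, of j] by (simp add: mat_of_cols_def)
  qed auto
  then have "vec_space.rank ?m (mat_of_cols ?m (map fract_vec N)) = 0"
    by (simp add: vec_space.rank_0I)
  then show ?thesis using N unfolding is_poly_null_basis_def by simp
qed

section \<open>The block bidiagonal pencil\<close>

locale block_bidiagonal_pencil =
  fixes k :: nat and t :: "nat \<Rightarrow> nat"
    and E :: "nat \<Rightarrow> complex mat" and Ahat :: "nat \<Rightarrow> complex mat"
  assumes k: "k \<ge> 1"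
    and t_pos: "\<forall>i \<in> {1..k}. t i \<ge> 1"
    and t_mono: "\<forall>i \<in> {1..<k}. t i \<ge> t (Suc i)"
    and E_dim: "\<forall>i \<in> {1..k}. E i \<in> carrier_mat (t i) (t i)"
    and E_ut: "\<forall>i \<in> {1..k}. upper_triangular (E i) \<and> invertible_mat (E i)"
    and Ahat_dim: "\<forall>i \<in> {1..<k}. Ahat i \<in> carrier_mat (t (Suc i)) (t (Suc i))"
    and Ahat_ut: "\<forall>i \<in> {1..<k}. upper_triangular (Ahat i) \<and> invertible_mat (Ahat i)"
begin

text \<open>A definition rather than an abbreviation: the simplifier rewrites the bound \<open>1\<close> to
  \<open>Suc 0\<close>, after which simp rules stated in terms of an abbreviated \<open>n\<close> no longer match.\<close>

definition n :: nat where "n = (\<Sum>i = 1..k. t i)"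

abbreviation P :: "complex poly mat" where "P \<equiv> pencil (A0 t k Ahat) (E0 t k E)"
abbreviation Ab :: "nat \<Rightarrow> complex mat" where "Ab \<equiv> Ablk t Ahat"
abbreviation Z :: "nat \<Rightarrow> complex mat" where "Z \<equiv> Zhat t E Ahat"
abbreviation Zs :: "nat \<Rightarrow> nat \<Rightarrow> complex mat" where "Zs \<equiv> Zprod t E Ahat"
abbreviation X :: "nat \<Rightarrow> complex poly mat" where "X \<equiv> Xmat t k E Ahat"

definition block_vec :: "'a vec \<Rightarrow> nat \<Rightarrow> 'a vec" where
  "block_vec y i = vec (t i) (\<lambda>q. y $ (boff t i + q))"

lemma block_vec_carrier [simp]: "block_vec y i \<in> carrier_vec (t i)"
  and dim_block_vec [simp]: "dim_vec (block_vec y i) = t i"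
  and index_block_vec [simp]: "q < t i \<Longrightarrow> block_vec y i $ q = y $ (boff t i + q)"
  unfolding block_vec_def by auto

lemma t_antimono: "1 \<le> i \<Longrightarrow> i \<le> j \<Longrightarrow> j \<le> k \<Longrightarrow> t j \<le> t i"
proof (induction j)
  case (Suc j)
  show ?case
  proof (cases "i = Suc j")
    case False
    then have "t (Suc j) \<le> t j" using t_mono Suc.prems by auto
    then show ?thesis using Suc False by auto
  qed simp
qed simp

lemma t_Suc_le: "1 \<le> i \<Longrightarrow> i < k \<Longrightarrow> t (Suc i) \<le> t i"
  using t_mono by simp

lemma block_le_n: "1 \<le> i \<Longrightarrow> i \<le> k \<Longrightarrow> boff t i + t i \<le> n"
  using boff_Suc[of i t] boff_mono[of "Suc i" "Suc k" t] boff_Suc_eq_sum[of t k] by (simp add: n_def)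

lemma t_1_le_n: "t 1 \<le> n"
  using block_le_n[of 1] k by simp

lemma block_position:
  assumes "r < n"
  obtains i a where "1 \<le> i" "i \<le> k" "a < t i" "r = boff t i + a"
  using block_position_exists[of r t k] assms boff_Suc_eq_sum[of t k] by (auto simp: n_def)

lemma E_carrier: "1 \<le> i \<Longrightarrow> i \<le> k \<Longrightarrow> E i \<in> carrier_mat (t i) (t i)"
  and E_upper_triangular: "1 \<le> i \<Longrightarrow> i \<le> k \<Longrightarrow> upper_triangular (E i)"
  and E_invertible: "1 \<le> i \<Longrightarrow> i \<le> k \<Longrightarrow> invertible_mat (E i)"
  using E_dim E_ut by auto

lemma Ahat_carrier: "1 \<le> i \<Longrightarrow> i < k \<Longrightarrow> Ahat i \<in> carrier_mat (t (Suc i)) (t (Suc i))"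
  and Ahat_upper_triangular: "1 \<le> i \<Longrightarrow> i < k \<Longrightarrow> upper_triangular (Ahat i)"
  and Ahat_invertible: "1 \<le> i \<Longrightarrow> i < k \<Longrightarrow> invertible_mat (Ahat i)"
  using Ahat_dim Ahat_ut by auto

lemma E_diag_ne_0: "1 \<le> i \<Longrightarrow> i \<le> k \<Longrightarrow> p < t i \<Longrightarrow> E i $$ (p, p) \<noteq> 0"
  using invertible_upper_triangular_diag_ne_0[OF E_carrier E_upper_triangular E_invertible] .

lemma A0_carrier [simp]: "A0 t k Ahat \<in> carrier_mat n n"
  and E0_carrier [simp]: "E0 t k E \<in> carrier_mat n n"
  and dim_A0 [simp]: "dim_row (A0 t k Ahat) = n" "dim_col (A0 t k Ahat) = n"
  and dim_E0 [simp]: "dim_row (E0 t k E) = n" "dim_col (E0 t k E) = n"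
  unfolding A0_def E0_def n_def by auto

lemma Ablk_carrier [simp]: "Ab i \<in> carrier_mat (t i) (t (Suc i))"
  and dim_Ablk [simp]: "dim_row (Ab i) = t i" "dim_col (Ab i) = t (Suc i)"
  unfolding Ablk_def by auto

lemma Ablk_index: "a < t i \<Longrightarrow> b < t (Suc i) \<Longrightarrow>
    Ab i $$ (a, b) = (if a < t (Suc i) then Ahat i $$ (a, b) else 0)"
  unfolding Ablk_def by auto

lemma A0_block_row:
  assumes i: "1 \<le> i" "i \<le> k" "a < t i" and c: "c < n"
  shows "A0 t k Ahat $$ (boff t i + a, c) =
    (if i < k \<and> boff t (Suc i) \<le> c \<and> c < boff t (Suc i) + t (Suc i)
     then Ab i $$ (a, c - boff t (Suc i)) else 0)"
proof -
  have "boff t i + a < n" using block_le_n[OF i(1,2)] i by simp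
  then have "A0 t k Ahat $$ (boff t i + a, c) =
     (\<Sum>l = 1..<k. block_entry (boff t l) (boff t (Suc l)) (Ab l) (boff t i + a) c)"
    unfolding A0_def using c by (simp add: n_def)
  also have "\<dots> = (if i \<in> {1..<k}
      then block_entry (boff t i) (boff t (Suc i)) (Ab i) (boff t i + a) c else 0)"
    by (rule sum_block_entry_block_row) (use i in auto)
  finally show ?thesis using i by (auto simp: block_entry_block_row)
qed

lemma E0_block_row:
  assumes i: "1 \<le> i" "i \<le> k" "a < t i" and c: "c < n"
  shows "E0 t k E $$ (boff t i + a, c) =
    (if boff t i \<le> c \<and> c < boff t i + t i then E i $$ (a, c - boff t i) else 0)"
proof -
  have "boff t i + a < n" using block_le_n[OF i(1,2)] i by simp
  then have "E0 t k E $$ (boff t i + a, c) =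
     (\<Sum>l = 1..k. block_entry (boff t l) (boff t l) (E l) (boff t i + a) c)"
    unfolding E0_def using c by (simp add: n_def)
  also have "\<dots> = (if i \<in> {1..k} then block_entry (boff t i) (boff t i) (E i) (boff t i + a) c else 0)"
    by (rule sum_block_entry_block_row) (use i E_carrier in auto)
  finally show ?thesis using i E_carrier[of i] by (auto simp: block_entry_block_row)
qed

lemma A0_mult_vec_block:
  assumes y: "y \<in> carrier_vec n" and i: "1 \<le> i" "i \<le> k" "a < t i"
  shows "(A0 t k Ahat *\<^sub>v y) $ (boff t i + a) =
     (if i < k then (Ab i *\<^sub>v block_vec y (Suc i)) $ a else 0)"
proof (cases "i < k")
  case True
  have le: "boff t (Suc i) + t (Suc i) \<le> n" using block_le_n[of "Suc i"] True by simp
  have "boff t i + a < n" using block_le_n[OF i(1,2)] i by simp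
  then have "(A0 t k Ahat *\<^sub>v y) $ (boff t i + a) = (\<Sum>c<n. A0 t k Ahat $$ (boff t i + a, c) * y $ c)"
    using y by (simp add: scalar_prod_def atLeast0LessThan)
  also have "\<dots> = (\<Sum>c<n. (if boff t (Suc i) \<le> c \<and> c < boff t (Suc i) + t (Suc i)
            then Ab i $$ (a, c - boff t (Suc i)) else 0) * y $ c)"
    using A0_block_row[OF i] True by (intro sum.cong) auto
  also have "\<dots> = (\<Sum>q<t (Suc i). Ab i $$ (a, q) * y $ (boff t (Suc i) + q))"
    by (rule sum_window_mult[OF le])
  also have "\<dots> = (Ab i *\<^sub>v block_vec y (Suc i)) $ a"
    using i by (simp add: scalar_prod_def atLeast0LessThan)
  finally show ?thesis using True by simp
next
  case False
  have "boff t i + a < n" using block_le_n[OF i(1,2)] i by simp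
  then show ?thesis using A0_block_row[OF i] False y by (simp add: scalar_prod_def)
qed

lemma E0_mult_vec_block:
  assumes y: "y \<in> carrier_vec n" and i: "1 \<le> i" "i \<le> k" "a < t i"
  shows "(E0 t k E *\<^sub>v y) $ (boff t i + a) = (E i *\<^sub>v block_vec y i) $ a"
proof -
  have le: "boff t i + t i \<le> n" using block_le_n[OF i(1,2)] .
  then have "(E0 t k E *\<^sub>v y) $ (boff t i + a) = (\<Sum>c<n. E0 t k E $$ (boff t i + a, c) * y $ c)"
    using y i by (simp add: scalar_prod_def atLeast0LessThan)
  also have "\<dots> = (\<Sum>c<n. (if boff t i \<le> c \<and> c < boff t i + t i
            then E i $$ (a, c - boff t i) else 0) * y $ c)"
    using E0_block_row[OF i] by (intro sum.cong) auto
  also have "\<dots> = (\<Sum>q<t i. E i $$ (a, q) * y $ (boff t i + q))"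
    by (rule sum_window_mult[OF le])
  also have "\<dots> = (E i *\<^sub>v block_vec y i) $ a"
    using i E_carrier[of i] by (simp add: scalar_prod_def atLeast0LessThan)
  finally show ?thesis .
qed

lemma Z_carrier: "1 \<le> i \<Longrightarrow> i < k \<Longrightarrow> Z i \<in> carrier_mat (t i) (t (Suc i))"
  unfolding Zhat_def using mat_inverse_invertible(1)[OF E_carrier E_invertible, of i]
  by (intro uminus_carrier_mat mult_carrier_mat) auto

lemma E_mult_Z:
  assumes i: "1 \<le> i" "i < k"
  shows "E i * Z i = - Ab i"
proof -
  define F where "F = the (mat_inverse (E i))"
  have F: "F \<in> carrier_mat (t i) (t i)" "E i * F = 1\<^sub>m (t i)"
    using mat_inverse_invertible[OF E_carrier E_invertible] i unfolding F_def by auto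
  have Ei: "E i \<in> carrier_mat (t i) (t i)" using E_carrier i by auto
  have "E i * Z i = - (E i * (F * Ab i))"
    unfolding Zhat_def F_def[symmetric] using F Ei by (subst uminus_mult_right_mat) auto
  also have "E i * (F * Ab i) = (E i * F) * Ab i"
    using F Ei by (intro assoc_mult_mat[symmetric]) auto
  finally show ?thesis using F by simp
qed

lemma Z_mult_vec_eq:
  assumes i: "1 \<le> i" "i < k" and x: "x \<in> carrier_vec (t i)" and y: "y \<in> carrier_vec (t (Suc i))"
    and eq: "E i *\<^sub>v x + Ab i *\<^sub>v y = 0\<^sub>v (t i)"
  shows "x = Z i *\<^sub>v y"
proof -
  define F where "F = the (mat_inverse (E i))"
  have F: "F \<in> carrier_mat (t i) (t i)" "F * E i = 1\<^sub>m (t i)"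
    using mat_inverse_invertible[OF E_carrier E_invertible] i unfolding F_def by auto
  have Ei: "E i \<in> carrier_mat (t i) (t i)" using E_carrier i by auto
  have Ex: "E i *\<^sub>v x = - (Ab i *\<^sub>v y)"
  proof (rule eq_vecI)
    fix a assume a: "a < dim_vec (- (Ab i *\<^sub>v y))"
    have "(E i *\<^sub>v x) $ a + (Ab i *\<^sub>v y) $ a = 0"
      using arg_cong[OF eq, of "\<lambda>v. v $ a"] a Ei x by simp
    then show "(E i *\<^sub>v x) $ a = (- (Ab i *\<^sub>v y)) $ a" using a by (simp add: eq_neg_iff_add_eq_0)
  qed (use Ei in simp)
  have "x = (F * E i) *\<^sub>v x" using F(2) x by simp
  also have "\<dots> = F *\<^sub>v (- (Ab i *\<^sub>v y))" using assoc_mult_mat_vec[OF F(1) Ei x] Ex by simp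
  also have "\<dots> = - (F *\<^sub>v (Ab i *\<^sub>v y))" using F y by (intro eq_vecI) auto
  also have "\<dots> = - ((F * Ab i) *\<^sub>v y)" using assoc_mult_mat_vec[OF F(1) Ablk_carrier y] by simp
  also have "\<dots> = Z i *\<^sub>v y" unfolding Zhat_def F_def[symmetric] using F y by (intro eq_vecI) auto
  finally show ?thesis .
qed

lemma Ablk_upper_trapezoidal:
  assumes i: "1 \<le> i" "i < k"
  shows "upper_trapezoidal (Ab i)"
  unfolding upper_trapezoidal_def
proof (intro allI impI)
  fix a b assume "a < dim_row (Ab i)" "b < dim_col (Ab i)" "b < a"
  then show "Ab i $$ (a, b) = 0"
    using upper_triangularD[OF Ahat_upper_triangular[OF i]] Ahat_carrier[OF i] by (simp add: Ablk_index)
qed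

lemma Z_upper_trapezoidal:
  assumes i: "1 \<le> i" "i < k"
  shows "upper_trapezoidal (Z i)"
proof (rule upper_trapezoidal_right_factor[OF E_carrier E_upper_triangular E_diag_ne_0 Z_carrier])
  show "upper_trapezoidal (E i * Z i)"
    using Ablk_upper_trapezoidal[OF i] by (simp add: E_mult_Z[OF i] upper_trapezoidal_def)
qed (use i in auto)

lemma Z_diag_ne_0:
  assumes i: "1 \<le> i" "i < k" and p: "p < t (Suc i)"
  shows "Z i $$ (p, p) \<noteq> 0"
proof -
  have pi: "p < t i" using p t_Suc_le[OF i] by linarith
  have "E i $$ (p, p) * Z i $$ (p, p) = (E i * Z i) $$ (p, p)"
    using upper_trapezoidal_mult_diag[OF E_carrier Z_carrier
        upper_triangular_imp_upper_trapezoidal[OF E_upper_triangular] Z_upper_trapezoidal] i p pi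
    by simp
  also have "\<dots> = - Ahat i $$ (p, p)"
    using E_mult_Z[OF i] p pi Z_carrier[OF i] by (simp add: Ablk_index)
  also have "\<dots> \<noteq> 0"
    using invertible_upper_triangular_diag_ne_0[OF Ahat_carrier Ahat_upper_triangular Ahat_invertible] i p
    by simp
  finally show ?thesis by auto
qed

lemma Zprod_same [simp]: "Zs j j = 1\<^sub>m (t j)"
  unfolding Zprod_def by simp

lemma Zprod_step: "l < j \<Longrightarrow> Zs l j = Z l * Zs (Suc l) j"
  unfolding Zprod_def by (simp add: upt_conv_Cons)

lemma Zprod_carrier: "1 \<le> l \<Longrightarrow> l \<le> j \<Longrightarrow> j \<le> k \<Longrightarrow> Zs l j \<in> carrier_mat (t l) (t j)"
proof (induction "j - l" arbitrary: l)
  case (Suc d)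
  then show ?case using Zprod_step[of l j] Z_carrier[of l] by fastforce
qed simp

lemma Zprod_upper_trapezoidal: "1 \<le> l \<Longrightarrow> l \<le> j \<Longrightarrow> j \<le> k \<Longrightarrow> upper_trapezoidal (Zs l j)"
proof (induction "j - l" arbitrary: l)
  case 0
  then show ?case by (simp add: upper_trapezoidal_one)
next
  case (Suc d)
  then have l: "l < j" "l < k" by auto
  have "upper_trapezoidal (Z l * Zs (Suc l) j)"
    by (rule upper_trapezoidal_mult[OF Z_carrier Zprod_carrier Z_upper_trapezoidal Suc.hyps(1)])
      (use Suc l in auto)
  then show ?case using Zprod_step[OF l(1)] by simp
qed

lemma E_mult_Zprod:
  assumes "1 \<le> i" "i < j" "j \<le> k"
  shows "E i * Zs i j = - (Ab i * Zs (Suc i) j)"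
proof -
  have Zs: "Zs (Suc i) j \<in> carrier_mat (t (Suc i)) (t j)" using Zprod_carrier assms by simp
  have "E i * Zs i j = (E i * Z i) * Zs (Suc i) j"
    unfolding Zprod_step[OF assms(2)] using E_carrier[of i] Z_carrier[of i] Zs assms
    by (simp add: assoc_mult_mat)
  also have "\<dots> = - (Ab i * Zs (Suc i) j)" using E_mult_Z[of i] Zs assms by simp
  finally show ?thesis .
qed

lemma Zprod_diag_ne_0: "1 \<le> l \<Longrightarrow> l \<le> j \<Longrightarrow> j \<le> k \<Longrightarrow> p < t j \<Longrightarrow> Zs l j $$ (p, p) \<noteq> 0"
proof (induction "j - l" arbitrary: l)
  case (Suc d)
  then have l: "l < j" "l < k" by auto
  have "t j \<le> t (Suc l)" "t (Suc l) \<le> t l" using Suc t_antimono[of "Suc l" j] t_Suc_le[of l] l by auto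
  then have "(Z l * Zs (Suc l) j) $$ (p, p) = Z l $$ (p, p) * Zs (Suc l) j $$ (p, p)"
    using Suc l by (intro upper_trapezoidal_mult_diag[OF Z_carrier Zprod_carrier
        Z_upper_trapezoidal Zprod_upper_trapezoidal]) auto
  then show ?case using Zprod_step[OF l(1)] Z_diag_ne_0[of l p] Suc l \<open>t j \<le> t (Suc l)\<close> by simp
qed simp

subsection \<open>Regularity and eigenvalues\<close>

lemma n_pos: "0 < n"
proof -
  have "1 \<le> t 1" using t_pos k by auto
  then show ?thesis using t_1_le_n by linarith
qed

lemma A0_on_and_below_diag:
  assumes r: "r < n" and c: "c \<le> r"
  shows "A0 t k Ahat $$ (r, c) = 0"
proof -
  obtain i a where i: "1 \<le> i" "i \<le> k" "a < t i" and ra: "r = boff t i + a"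
    using block_position[OF r] .
  have "c < n" using r c by simp
  then show ?thesis using A0_block_row[OF i] boff_Suc[OF i(1), of t] ra c i(3) by auto
qed

lemma E0_below_diag:
  assumes r: "r < n" and c: "c < r"
  shows "E0 t k E $$ (r, c) = 0"
proof -
  obtain i a where i: "1 \<le> i" "i \<le> k" "a < t i" and ra: "r = boff t i + a"
    using block_position[OF r] .
  have "c < n" using r c by simp
  then show ?thesis using E0_block_row[OF i] E_carrier[OF i(1,2)] ra c i(3)
      upper_triangularD[OF E_upper_triangular[OF i(1,2)], of "c - boff t i" a] by auto
qed

lemma E0_diag_ne_0:
  assumes r: "r < n"
  shows "E0 t k E $$ (r, r) \<noteq> 0"
proof -
  obtain i a where i: "1 \<le> i" "i \<le> k" "a < t i" and ra: "r = boff t i + a"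
    using block_position[OF r] .
  then have "E0 t k E $$ (r, r) = E i $$ (a, a)" using E0_block_row[OF i, of r] r by simp
  then show ?thesis using E_diag_ne_0[OF i] by simp
qed

lemma pencil_carrier [simp]: "P \<in> carrier_mat n n"
  by (rule carrier_matI) (simp_all only: dim_pencil dim_A0)

lemma pencil_below_diag: "r < n \<Longrightarrow> c < r \<Longrightarrow> P $$ (r, c) = 0"
  by (simp add: pencil_def A0_on_and_below_diag E0_below_diag)

lemma pencil_diag: "r < n \<Longrightarrow> P $$ (r, r) = [:0, E0 t k E $$ (r, r):]"
  by (simp add: pencil_def A0_on_and_below_diag)

lemma det_fract_pencil_ne_0: "det (fract_mat P) \<noteq> 0"
proof -
  have c: "fract_mat P \<in> carrier_mat n n" unfolding fract_mat_def by (simp only: map_carrier_mat pencil_carrier)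
  have "upper_triangular (fract_mat P)"
    by (auto simp: fract_mat_def pencil_below_diag)
  moreover have "0 \<notin> set (diag_mat (fract_mat P))"
    by (auto simp: diag_mat_def fract_mat_def pencil_diag E0_diag_ne_0)
  ultimately show ?thesis using upper_triangular_imp_det_eq_0_iff[OF c] by simp
qed

lemma rank_rat_pencil: "rank_rat P = n"
proof -
  have c: "fract_mat P \<in> carrier_mat n n" unfolding fract_mat_def by (simp only: map_carrier_mat pencil_carrier)
  show ?thesis
    unfolding rank_rat_def using vec_space.det_rank_iff[OF c] det_fract_pencil_ne_0 by simp
qed

lemma rank_eval_pencil_less_iff: "rank_C (eval_mat P \<mu>) < n \<longleftrightarrow> \<mu> = 0"
proof -
  have c: "eval_mat P \<mu> \<in> carrier_mat n n"
    unfolding eval_mat_def by (simp only: map_carrier_mat pencil_carrier)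
  have "upper_triangular (eval_mat P \<mu>)"
    by (auto simp: eval_mat_def pencil_below_diag)
  moreover have "diag_mat (eval_mat P \<mu>) = map (\<lambda>r. \<mu> * E0 t k E $$ (r, r)) [0..<n]"
    by (simp add: diag_mat_def eval_mat_def pencil_diag)
  moreover have "0 \<in> set (map (\<lambda>r. \<mu> * E0 t k E $$ (r, r)) [0..<n]) \<longleftrightarrow> \<mu> = 0"
    using E0_diag_ne_0 n_pos by (force simp: image_iff)
  ultimately have "det (eval_mat P \<mu>) = 0 \<longleftrightarrow> \<mu> = 0"
    using upper_triangular_imp_det_eq_0_iff[OF c] by simp
  then show ?thesis
    using vec_space.det_rank_iff[OF c] vec_space.rank_le_nc[OF c] carrier_matD(1)[OF c]
    by (auto simp: rank_C_def order_less_le)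
qed

lemma is_eigenvalue_pencil_iff: "is_eigenvalue P \<mu> \<longleftrightarrow> \<mu> = 0"
  unfolding is_eigenvalue_def rank_rat_pencil by (rule rank_eval_pencil_less_iff)

lemma right_minimal_basis_Nil: "is_right_minimal_basis P N \<Longrightarrow> N = []"
  using poly_null_basis_Nil_if_det_ne_0[OF pencil_carrier det_fract_pencil_ne_0]
  by (simp add: is_right_minimal_basis_def)

subsection \<open>The columns of \<open>X\<^sub>j\<close> are zero directions of order \<open>j\<close>\<close>

lemma dim_Xmat [simp]: "dim_row (X j) = n" "dim_col (X j) = t j"
  unfolding Xmat_def n_def by auto

lemma col_Xmat_carrier [simp]: "col (X j) p \<in> carrier_vec n"
  by (rule carrier_vecI) simp

lemma Xmat_block_row:
  assumes j: "1 \<le> j" "j \<le> k" and p: "p < t j" and i: "1 \<le> i" "i \<le> k" "a < t i"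
  shows "X j $$ (boff t i + a, p) = (if i \<le> j then monom (Zs i j $$ (a, p)) (i - 1) else 0)"
proof -
  have Zc: "Zs l j \<in> carrier_mat (t l) (t j)" if "l \<in> {1..j}" for l
    using Zprod_carrier that j by auto
  have "boff t i + a < n" using block_le_n[OF i(1,2)] i by simp
  then have "X j $$ (boff t i + a, p) = (\<Sum>l = 1..j. block_entry (boff t l) 0
      (map_mat (\<lambda>a. monom a (l - 1)) (Zs l j)) (boff t i + a) p)"
    unfolding Xmat_def using p by (simp add: n_def)
  also have "\<dots> = (if i \<in> {1..j} then block_entry (boff t i) 0
      (map_mat (\<lambda>a. monom a (i - 1)) (Zs i j)) (boff t i + a) p else 0)"
    by (rule sum_block_entry_block_row) (use i Zc in auto)
  finally show ?thesis using i Zc[of i] p by (auto simp: block_entry_block_row)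
qed

lemma block_coeff_col_Xmat:
  assumes j: "1 \<le> j" "j \<le> k" and p: "p < t j" and i: "1 \<le> i" "i \<le> k"
  shows "block_vec (coeff_vec (col (X j) p) s) i
    = (if i \<le> j \<and> s = i - 1 then col (Zs i j) p else 0\<^sub>v (t i))"
proof (rule eq_vecI)
  fix a assume "a < dim_vec (if i \<le> j \<and> s = i - 1 then col (Zs i j) p else 0\<^sub>v (t i))"
  then have a: "a < t i" using Zprod_carrier[of i j] j i by (auto split: if_splits)
  have "boff t i + a < n" using block_le_n[OF i] a by simp
  then have "block_vec (coeff_vec (col (X j) p) s) i $ a = coeff (X j $$ (boff t i + a, p)) s"
    using a p by simp
  also have "\<dots> = (if i \<le> j \<and> s = i - 1 then Zs i j $$ (a, p) else 0)"
    using Xmat_block_row[OF j p i a] by auto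
  finally show "block_vec (coeff_vec (col (X j) p) s) i $ a
      = (if i \<le> j \<and> s = i - 1 then col (Zs i j) p else 0\<^sub>v (t i)) $ a"
    using Zprod_carrier[of i j] j i a p by auto
qed (use Zprod_carrier[of i j] j i in auto)

lemma eval_col_Xmat_0:
  assumes j: "1 \<le> j" "j \<le> k" and p: "p < t j" and r: "r < n"
  shows "eval_vec (col (X j) p) 0 $ r = (if r < t 1 then Zs 1 j $$ (r, p) else 0)"
proof -
  obtain i a where i: "1 \<le> i" "i \<le> k" "a < t i" and ra: "r = boff t i + a"
    using block_position[OF r] .
  have "eval_vec (col (X j) p) 0 $ r = block_vec (coeff_vec (col (X j) p) 0) i $ a"
    using r p i ra by (simp add: eval_vec_0)
  also have "\<dots> = (if i = 1 then Zs 1 j $$ (a, p) else 0)"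
    using block_coeff_col_Xmat[OF j p i(1,2), of 0] Zprod_carrier[of i j] i j p by auto
  also have "\<dots> = (if r < t 1 then Zs 1 j $$ (r, p) else 0)"
    using ra i boff_add_le[of 1 i t] by (cases "i = 1") auto
  finally show ?thesis .
qed

text \<open>Coefficientwise \<open>P X\<^sub>j = \<lambda>\<^sup>j [0; \<dots>; E\<^sub>j; \<dots>; 0]\<close>: since \<open>E i * Z i = - Ab i\<close>,
  all other coefficients cancel in consecutive block rows.\<close>

lemma coeff_pencil_mult_col_Xmat:
  assumes j: "1 \<le> j" "j \<le> k" and p: "p < t j" and i: "1 \<le> i" "i \<le> k" "a < t i"
  shows "coeff ((P *\<^sub>v col (X j) p) $ (boff t i + a)) s = (if s = j \<and> i = j then E j $$ (a, p) else 0)"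
proof -
  let ?x = "col (X j) p"
  have r: "boff t i + a < n" using block_le_n[OF i(1,2)] i by simp
  have Ei: "E i \<in> carrier_mat (t i) (t i)" using E_carrier i by auto
  have "coeff ((P *\<^sub>v ?x) $ (boff t i + a)) s
      = (if i < k then (Ab i *\<^sub>v block_vec (coeff_vec ?x s) (Suc i)) $ a else 0)
        + (if s = 0 then 0 else (E i *\<^sub>v block_vec (coeff_vec ?x (s - 1)) i) $ a)"
    using coeff_pencil_mult_vec[OF A0_carrier E0_carrier col_Xmat_carrier r]
      A0_mult_vec_block[OF _ i] E0_mult_vec_block[OF _ i] by simp
  also have "\<dots> = (if s = j \<and> i = j then E j $$ (a, p) else 0)"
  proof -
    have next_block: "i < k \<Longrightarrow> block_vec (coeff_vec ?x s) (Suc i)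
        = (if Suc i \<le> j \<and> s = i then col (Zs (Suc i) j) p else 0\<^sub>v (t (Suc i)))"
      using block_coeff_col_Xmat[OF j p, of "Suc i" s] i by auto
    have this_block: "s \<noteq> 0 \<Longrightarrow> block_vec (coeff_vec ?x (s - 1)) i
        = (if i \<le> j \<and> s = i then col (Zs i j) p else 0\<^sub>v (t i))"
      using block_coeff_col_Xmat[OF j p i(1,2), of "s - 1"] i by auto
    consider "s \<noteq> i \<or> j < i" | "s = i" "i < j" | "s = i" "i = j" by linarith
    then show ?thesis
    proof cases
      case 1
      then show ?thesis using next_block this_block i Ei by auto
    next
      case 2
      then have ik: "i < k" using j by simp
      have Zs: "Zs (Suc i) j \<in> carrier_mat (t (Suc i)) (t j)" using Zprod_carrier 2 j by simp
      have "(E i * Zs i j) $$ (a, p) = - (Ab i * Zs (Suc i) j) $$ (a, p)"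
        using E_mult_Zprod[OF i(1) 2(2) j(2)] Zs i p by simp
      moreover have "(E i *\<^sub>v col (Zs i j) p) $ a = (E i * Zs i j) $$ (a, p)"
        using Ei Zprod_carrier[of i j] i j p 2 by simp
      moreover have "(Ab i *\<^sub>v col (Zs (Suc i) j) p) $ a = (Ab i * Zs (Suc i) j) $$ (a, p)"
        using Zs i p by simp
      ultimately have "(E i *\<^sub>v col (Zs i j) p) $ a = - (Ab i *\<^sub>v col (Zs (Suc i) j) p) $ a"
        by simp
      then show ?thesis using next_block this_block 2 ik i by simp
    next
      case 3
      then show ?thesis using next_block this_block i Ei p by simp
    qed
  qed
  finally show ?thesis .
qed

lemma col_Xmat_zero_direction:
  assumes j: "1 \<le> j" "j \<le> k" and p: "p < t j"
  shows "zero_direction P 0 (col (X j) p) j"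
proof -
  let ?x = "col (X j) p"
  let ?c = "boff t j + p"
  define w :: "complex poly vec" where "w = vec n (\<lambda>r. [:E0 t k E $$ (r, ?c):])"
  have dim_w: "dim_vec w = n" by (simp add: w_def)
  have c: "?c < n" using block_le_n[OF j] p by simp
  have "eval_vec ?x 0 $ p = Zs 1 j $$ (p, p)"
    using eval_col_Xmat_0[OF j p] p t_antimono[of 1 j] j t_1_le_n by simp
  then have x0: "eval_vec ?x 0 \<noteq> 0\<^sub>v n"
    using Zprod_diag_ne_0[of 1 j p] j p t_antimono[of 1 j] t_1_le_n by auto
  have "eval_vec w 0 $ ?c = E0 t k E $$ (?c, ?c)" using c by (simp add: w_def eval_vec_def)
  then have w0: "eval_vec w 0 \<noteq> 0\<^sub>v n" using E0_diag_ne_0[OF c] c by auto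
  have "P *\<^sub>v ?x = [:-0, 1:] ^ j \<cdot>\<^sub>v w"
  proof (rule eq_vecI)
    fix r assume "r < dim_vec ([:-0, 1:] ^ j \<cdot>\<^sub>v w)"
    then have r: "r < n" by (simp add: w_def)
    obtain i a where i: "1 \<le> i" "i \<le> k" "a < t i" and ra: "r = boff t i + a"
      using block_position[OF r] .
    show "(P *\<^sub>v ?x) $ r = ([:-0, 1:] ^ j \<cdot>\<^sub>v w) $ r"
    proof (rule poly_eqI)
      fix s
      have "coeff (([:-0, 1:] ^ j \<cdot>\<^sub>v w) $ r) s = coeff ([:0, 1:] ^ j * w $ r) s"
        using r dim_w by simp
      also have "\<dots> = (if s < j then 0 else coeff (w $ r) (s - j))"
        by (rule coeff_x_power_mult)
      also have "\<dots> = (if s = j then E0 t k E $$ (r, ?c) else 0)"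
        using r by (auto simp: w_def coeff_pCons split: nat.split)
      also have "\<dots> = (if s = j \<and> i = j then E j $$ (a, p) else 0)"
        using E0_block_row[OF i c] ra block_position_unique[of j i a t]
          block_position_unique[of i j p t] i j p by auto
      finally show "coeff ((P *\<^sub>v ?x) $ r) s = coeff (([:-0, 1:] ^ j \<cdot>\<^sub>v w) $ r) s"
        using coeff_pencil_mult_col_Xmat[OF j p i] ra by simp
    qed
  qed (simp add: w_def)
  then show ?thesis
    unfolding zero_direction_def using j x0 w0 by (auto simp: w_def)
qed

subsection \<open>Values at \<open>0\<close> of zero directions\<close>

lemma Ablk_mult_vec_eq_0:
  assumes i: "1 \<le> i" "i < k" and y: "y \<in> carrier_vec (t (Suc i))" and z: "Ab i *\<^sub>v y = 0\<^sub>v (t i)"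
  shows "y = 0\<^sub>v (t (Suc i))"
proof (rule invertible_mat_mult_vec_eq_0[OF Ahat_carrier[OF i] Ahat_invertible[OF i] y])
  show "Ahat i *\<^sub>v y = 0\<^sub>v (t (Suc i))"
  proof (rule eq_vecI)
    fix a assume "a < dim_vec (0\<^sub>v (t (Suc i)) :: complex vec)"
    then have a: "a < t (Suc i)" "a < t i" using t_Suc_le[OF i] by auto
    have "(Ahat i *\<^sub>v y) $ a = (Ab i *\<^sub>v y) $ a"
      using Ahat_carrier[OF i] y a by (simp add: scalar_prod_def Ablk_index)
    then show "(Ahat i *\<^sub>v y) $ a = 0\<^sub>v (t (Suc i)) $ a" using z a by simp
  qed (use Ahat_carrier[OF i] in simp)
qed

context
  fixes x w :: "complex poly vec" and m :: nat
  assumes x: "x \<in> carrier_vec n" and w: "w \<in> carrier_vec n" and m: "1 \<le> m"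
    and eq: "P *\<^sub>v x = [:0, 1:] ^ m \<cdot>\<^sub>v w"
begin

lemma coeff_block_row_eq_0:
  assumes s: "s < m" and i: "1 \<le> i" "i \<le> k" "a < t i"
  shows "(if i < k then (Ab i *\<^sub>v block_vec (coeff_vec x s) (Suc i)) $ a else 0)
      + (if s = 0 then 0 else (E i *\<^sub>v block_vec (coeff_vec x (s - 1)) i) $ a) = 0"
proof -
  have r: "boff t i + a < n" using block_le_n[OF i(1,2)] i by simp
  have "coeff ((P *\<^sub>v x) $ (boff t i + a)) s = 0"
    unfolding eq using r w s by (simp add: coeff_x_power_mult)
  then show ?thesis
    unfolding coeff_pencil_mult_vec[OF A0_carrier E0_carrier x r]
      A0_mult_vec_block[OF coeff_vec_carrier[OF x] i] E0_mult_vec_block[OF coeff_vec_carrier[OF x] i] .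
qed

lemma coeff_0_block_eq_0:
  assumes i: "2 \<le> i" "i \<le> k"
  shows "block_vec (coeff_vec x 0) i = 0\<^sub>v (t i)"
proof -
  obtain i' where i': "i = Suc i'" "1 \<le> i'" "i' < k" using i by (cases i) auto
  have "Ab i' *\<^sub>v block_vec (coeff_vec x 0) i = 0\<^sub>v (t i')"
  proof (rule eq_vecI)
    fix a assume "a < dim_vec (0\<^sub>v (t i') :: complex vec)"
    then show "(Ab i' *\<^sub>v block_vec (coeff_vec x 0) i) $ a = 0\<^sub>v (t i') $ a"
      using coeff_block_row_eq_0[of 0 i' a] m i' by simp
  qed simp
  then show ?thesis using Ablk_mult_vec_eq_0[OF i'(2,3)] i'(1) by simp
qed

lemma coeff_block_recursion:
  assumes s: "1 \<le> s" "s < m" and i: "1 \<le> i" "i < k"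
  shows "block_vec (coeff_vec x (s - 1)) i = Z i *\<^sub>v block_vec (coeff_vec x s) (Suc i)"
proof (rule Z_mult_vec_eq[OF i block_vec_carrier block_vec_carrier])
  have Ei: "E i \<in> carrier_mat (t i) (t i)" using E_carrier i by auto
  show "E i *\<^sub>v block_vec (coeff_vec x (s - 1)) i + Ab i *\<^sub>v block_vec (coeff_vec x s) (Suc i) = 0\<^sub>v (t i)"
  proof (rule eq_vecI)
    fix a assume "a < dim_vec (0\<^sub>v (t i) :: complex vec)"
    then show "(E i *\<^sub>v block_vec (coeff_vec x (s - 1)) i
        + Ab i *\<^sub>v block_vec (coeff_vec x s) (Suc i)) $ a = 0\<^sub>v (t i) $ a"
      using coeff_block_row_eq_0[of s i a] s i Ei by (simp add: add.commute)
  qed (use Ei in simp)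
qed

lemma first_block_coeff_0:
  assumes J: "1 \<le> J" "J \<le> m" "J \<le> k"
  shows "block_vec (coeff_vec x 0) 1 = Zs 1 J *\<^sub>v block_vec (coeff_vec x (J - 1)) J"
proof -
  have "block_vec (coeff_vec x (l - 1)) l = Zs l J *\<^sub>v block_vec (coeff_vec x (J - 1)) J"
    if "1 \<le> l" "l \<le> J" for l
    using that
  proof (induction "J - l" arbitrary: l)
    case 0
    then show ?case by simp
  next
    case (Suc d)
    then have l: "1 \<le> l" "l < J" "l < m" "l < k" using J by auto
    have "block_vec (coeff_vec x (l - 1)) l = Z l *\<^sub>v block_vec (coeff_vec x l) (Suc l)"
      using coeff_block_recursion[of l l] l by simp
    also have "\<dots> = Z l *\<^sub>v (Zs (Suc l) J *\<^sub>v block_vec (coeff_vec x (J - 1)) J)"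
      using Suc.hyps(1)[of "Suc l"] Suc.hyps(2) l by simp
    also have "\<dots> = Zs l J *\<^sub>v block_vec (coeff_vec x (J - 1)) J"
      using Zprod_step[OF l(2)] Z_carrier[of l] Zprod_carrier[of "Suc l" J] l J by simp
    finally show ?case .
  qed
  from this[of 1] show ?thesis using J by simp
qed

lemma last_block_eq_0:
  assumes "k < m"
  shows "block_vec (coeff_vec x (k - 1)) k = 0\<^sub>v (t k)"
proof (rule invertible_mat_mult_vec_eq_0[OF E_carrier E_invertible block_vec_carrier])
  show "E k *\<^sub>v block_vec (coeff_vec x (k - 1)) k = 0\<^sub>v (t k)"
  proof (rule eq_vecI)
    fix a assume "a < dim_vec (0\<^sub>v (t k) :: complex vec)"
    then show "(E k *\<^sub>v block_vec (coeff_vec x (k - 1)) k) $ a = 0\<^sub>v (t k) $ a"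
      using coeff_block_row_eq_0[of k k a] assms k by simp
  qed (use carrier_matD(1)[OF E_carrier[of k]] k in simp)
qed (use k in auto)

lemma eval_0_vanishes_beyond:
  assumes r: "r < n" "tsz t k m \<le> r"
  shows "eval_vec x 0 $ r = 0"
proof -
  obtain i a where i: "1 \<le> i" "i \<le> k" "a < t i" and ra: "r = boff t i + a"
    using block_position[OF r(1)] .
  have x0: "eval_vec x 0 $ r = block_vec (coeff_vec x 0) i $ a"
    using r i ra x by (simp add: eval_vec_0)
  show ?thesis
  proof (cases "i = 1")
    case False
    then show ?thesis using x0 coeff_0_block_eq_0[of i] i by simp
  next
    case True
    define J where "J = min m k"
    have J: "1 \<le> J" "J \<le> m" "J \<le> k" using m k by (auto simp: J_def)
    have Zs: "Zs 1 J \<in> carrier_mat (t 1) (t J)" "upper_trapezoidal (Zs 1 J)"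
      using Zprod_carrier[OF _ J(1,3)] Zprod_upper_trapezoidal[OF _ J(1,3)] by auto
    have a1: "a < t 1" using i True by simp
    have "eval_vec x 0 $ r = (\<Sum>b<t J. Zs 1 J $$ (a, b) * block_vec (coeff_vec x (J - 1)) J $ b)"
      using x0 True first_block_coeff_0[OF J] Zs(1) a1
      by (simp add: scalar_prod_def atLeast0LessThan)
    also have "\<dots> = 0"
    proof (cases "m \<le> k")
      case True
      then have "J = m" "tsz t k m = t m" using m by (auto simp: J_def tsz_def)
      then have "b < a" if "b < t J" for b using that r ra \<open>i = 1\<close> by simp
      then show ?thesis using upper_trapezoidalD[OF Zs(2)] Zs(1) a1 by (auto intro!: sum.neutral)
    next
      case False
      then show ?thesis using last_block_eq_0 by (simp add: J_def)
    qed
    finally show ?thesis .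
  qed
qed

end

subsection \<open>The columns of \<open>Q\<^sub>k, \<dots>, Q\<^sub>1\<close>\<close>

lemma zero_direction_eval_0_vanishes_beyond:
  assumes "zero_direction P 0 x m" "r < n" "tsz t k m \<le> r"
  shows "eval_vec x 0 $ r = 0"
  using assms eval_0_vanishes_beyond[of x _ m r] unfolding zero_direction_def by auto

lemma tsz_le_t_1: "tsz t k m \<le> t 1"
  using t_antimono[of 1 m] by (simp add: tsz_def)

text \<open>Column \<open>q < t\<^sub>1\<close> of the list \<open>Q\<^sub>k, \<dots>, Q\<^sub>1\<close> is column \<open>q\<close> of \<open>X\<^sub>j\<close> for the
  \<open>j = col_order q\<close> with \<open>t\<^sub>j\<^sub>+\<^sub>1 \<le> q < t\<^sub>j\<close>.\<close>

definition col_order :: "nat \<Rightarrow> nat" where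
  "col_order q = Max {j \<in> {1..k}. q < t j}"

definition Qcol :: "nat \<Rightarrow> complex poly vec \<times> nat" where
  "Qcol q = (col (X (col_order q)) q, col_order q)"

lemma col_order_bounds: "q < t 1 \<Longrightarrow> 1 \<le> col_order q \<and> col_order q \<le> k"
  and less_t_iff_le_col_order: "q < t 1 \<Longrightarrow> 1 \<le> m \<Longrightarrow> m \<le> k \<Longrightarrow> q < t m \<longleftrightarrow> m \<le> col_order q"
proof -
  assume q: "q < t 1"
  let ?S = "{j \<in> {1..k}. q < t j}"
  have S: "finite ?S" "1 \<in> ?S" using q k by auto
  then have mem: "col_order q \<in> ?S" unfolding col_order_def using Max_in by blast
  then show "1 \<le> col_order q \<and> col_order q \<le> k" by simp
  assume m: "1 \<le> m" "m \<le> k"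
  show "q < t m \<longleftrightarrow> m \<le> col_order q"
  proof
    assume "q < t m"
    then show "m \<le> col_order q" unfolding col_order_def using m S by (intro Max_ge) auto
  next
    assume "m \<le> col_order q"
    then show "q < t m" using t_antimono[of m "col_order q"] m mem by auto
  qed
qed

lemma less_t_col_order: "q < t 1 \<Longrightarrow> q < t (col_order q)"
  using less_t_iff_le_col_order col_order_bounds by blast

lemma col_order_antimono: "q \<le> q' \<Longrightarrow> q' < t 1 \<Longrightarrow> col_order q' \<le> col_order q"
  using less_t_iff_le_col_order[of q "col_order q'"] col_order_bounds[of q'] less_t_col_order[of q']
  by simp

lemma tsz_le_if_col_order_less:
  assumes q: "q < t 1" and "col_order q < m"
  shows "tsz t k m \<le> q"
proof (cases "m \<le> k")
  case True
  have "t m \<le> t (Suc (col_order q))" using t_antimono[of "Suc (col_order q)" m] assms True by simp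
  also have "t (Suc (col_order q)) \<le> q"
    using less_t_iff_le_col_order[OF q, of "Suc (col_order q)"] assms True by simp
  finally show ?thesis using True assms by (simp add: tsz_def)
qed (simp add: tsz_def)

lemma Qcols_eq: "1 \<le> j \<Longrightarrow> j \<le> k \<Longrightarrow> Qcols t k E Ahat j = map Qcol [tsz t k (Suc j)..<t j]"
  unfolding Qcols_def
proof (intro map_cong refl)
  fix p assume j: "1 \<le> j" "j \<le> k" and p: "p \<in> set [tsz t k (Suc j)..<t j]"
  have p1: "p < t 1" using p t_antimono[of 1 j] j by auto
  have "j \<le> col_order p" using less_t_iff_le_col_order[OF p1 j] p by simp
  moreover have "\<not> Suc j \<le> col_order p"
    using less_t_iff_le_col_order[OF p1, of "Suc j"] col_order_bounds[OF p1] p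
    by (auto simp: tsz_def)
  ultimately have "col_order p = j" by simp
  then show "(col (X j) p, j) = Qcol p" by (simp add: Qcol_def)
qed

lemma all_Qcols_eq: "all_Qcols t k E Ahat = map Qcol [0..<t 1]"
proof -
  have "concat (map (Qcols t k E Ahat) (rev [m..<Suc k])) = map Qcol [0..<tsz t k m]"
    if "1 \<le> m" "m \<le> Suc k" for m
    using that
  proof (induction "Suc k - m" arbitrary: m)
    case 0
    then show ?case by (simp add: tsz_def)
  next
    case (Suc d)
    then have m: "1 \<le> m" "m \<le> k" by auto
    have split: "[0..<t m] = [0..<tsz t k (Suc m)] @ [tsz t k (Suc m)..<t m]"
      using upt_add_eq_append[of 0 "tsz t k (Suc m)" "t m - tsz t k (Suc m)"] t_Suc_le[of m] m
      by (auto simp: tsz_def)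
    have "rev [m..<Suc k] = rev [Suc m..<Suc k] @ [m]" using m by (simp add: upt_conv_Cons)
    then show ?case
      using Suc.hyps(1)[of "Suc m"] Suc.hyps(2) m Qcols_eq[OF m] split by (simp add: tsz_def)
  qed
  from this[of 1] show ?thesis using k by (simp add: all_Qcols_def tsz_def)
qed

lemma Qcol_zero_direction: "q < t 1 \<Longrightarrow> zero_direction P 0 (fst (Qcol q)) (snd (Qcol q))"
  using col_Xmat_zero_direction col_order_bounds less_t_col_order by (simp add: Qcol_def)

lemma eval_Qcol_0:
  assumes q: "q < t 1" and r: "r < n"
  shows "eval_vec (fst (Qcol q)) 0 $ r = (if r < t 1 then Zs 1 (col_order q) $$ (r, q) else 0)"
  using eval_col_Xmat_0[OF _ _ less_t_col_order[OF q] r] col_order_bounds[OF q] by (simp add: Qcol_def)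

lemma eval_Qcol_0_below:
  assumes q: "q < t 1" and r: "q < r" "r < n"
  shows "eval_vec (fst (Qcol q)) 0 $ r = 0"
  using eval_Qcol_0[OF q r(2)] upper_trapezoidalD[OF Zprod_upper_trapezoidal, of 1 "col_order q" q r]
    Zprod_carrier[of 1 "col_order q"] col_order_bounds[OF q] less_t_col_order[OF q] r
  by simp

lemma eval_Qcol_0_diag: "q < t 1 \<Longrightarrow> eval_vec (fst (Qcol q)) 0 $ q \<noteq> 0"
  using eval_Qcol_0[of q q] Zprod_diag_ne_0[of 1 "col_order q" q] col_order_bounds
    less_t_col_order t_1_le_n by simp

lemma indep_Qcols: "indep_zero_dirs P [] 0 (map Qcol [0..<t 1])"
proof -
  let ?cs = "map (\<lambda>q. eval_vec (fst (Qcol q)) 0) [0..<t 1]"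
  have "full_col_rank n ?cs"
    by (rule full_col_rank_if_echelon)
      (use t_1_le_n eval_Qcol_0_below eval_Qcol_0_diag in \<open>auto simp: Qcol_def\<close>)
  then show ?thesis
    using Qcol_zero_direction by (simp add: indep_zero_dirs_def comp_def case_prod_beta)
qed

lemma indep_zero_dirs_length_le:
  assumes rs: "indep_zero_dirs P [] 0 rs"
  shows "length rs \<le> t 1"
proof (rule ccontr)
  let ?cs = "map (\<lambda>v. eval_vec v 0) ([] @ map fst rs)"
  have eval_dir: "\<exists>x m. zero_direction P 0 x m \<and> c = eval_vec x 0" if c: "c \<in> set ?cs" for c
  proof -
    obtain x m where "(x, m) \<in> set rs" "c = eval_vec x 0" using c by auto
    moreover from this(1) have "zero_direction P 0 x m" using rs by (auto simp: indep_zero_dirs_def)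
    ultimately show ?thesis by blast
  qed
  assume "\<not> length rs \<le> t 1"
  then have "\<not> full_col_rank n ?cs"
  proof (intro not_full_col_rank_if_supported[of _ _ "t 1"])
    show "set ?cs \<subseteq> carrier_vec n"
    proof
      fix c assume "c \<in> set ?cs"
      with eval_dir obtain x m where "zero_direction P 0 x m" "c = eval_vec x 0" by blast
      then show "c \<in> carrier_vec n" by (simp add: zero_direction_def)
    qed
    fix c r assume c: "c \<in> set ?cs" and r: "t 1 \<le> r" "r < n"
    with eval_dir obtain x m where "zero_direction P 0 x m" "c = eval_vec x 0" by blast
    then show "c $ r = 0"
      using zero_direction_eval_0_vanishes_beyond[of x m r] tsz_le_t_1[of m] r by simp
  qed simp
  then show False using rs by (simp add: indep_zero_dirs_def)
qed

lemma ordered_Qcols: "ordered_zero_dirs (map Qcol [0..<t 1])"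
proof -
  have "0 < col_order q" if "q < t 1" for q using col_order_bounds[OF that] by simp
  then show ?thesis
    unfolding ordered_zero_dirs_def sorted_wrt_iff_nth_less
    using col_order_antimono by (auto simp: Qcol_def)
qed

text \<open>A root polynomial of order exceeding that of the \<open>j\<close>-th column has its value at \<open>0\<close>
  in the span of the first \<open>j\<close> coordinates, which the first \<open>j\<close> columns already fill.\<close>

lemma no_larger_root_polynomial:
  assumes j: "j < t 1" and root: "root_polynomial P [] 0 r' k'" and order: "col_order j < k'"
  shows "\<not> full_col_rank n (map (\<lambda>v. eval_vec v 0) ([] @ map fst (take j (map Qcol [0..<t 1])) @ [r']))"
    (is "\<not> full_col_rank n ?cs")
proof (rule not_full_col_rank_if_supported[of _ _ j])
  have zd: "zero_direction P 0 r' k'" using root by (simp add: root_polynomial_def)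
  have cs: "?cs = map (\<lambda>q. eval_vec (fst (Qcol q)) 0) [0..<j] @ [eval_vec r' 0]"
    using j by (simp add: take_map)
  show "set ?cs \<subseteq> carrier_vec n"
    using zd unfolding cs by (auto simp: zero_direction_def Qcol_def)
  show "j < length ?cs" using j by simp
  fix c r assume "c \<in> set ?cs" "j \<le> r" "r < n"
  then show "c $ r = 0"
    using eval_Qcol_0_below[of _ r] zero_direction_eval_0_vanishes_beyond[OF zd, of r]
      tsz_le_if_col_order_less[OF j order] j unfolding cs by auto
qed

lemma maximal_root_polys_Qcols: "maximal_root_polys P [] 0 (all_Qcols t k E Ahat)"
  unfolding all_Qcols_eq maximal_root_polys_def complete_zero_dirs_def
  using indep_Qcols indep_zero_dirs_length_le ordered_Qcols no_larger_root_polynomial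
  by (fastforce simp: Qcol_def)

end

theorem theorem5p10:
  fixes k :: nat and t :: "nat \<Rightarrow> nat"
    and E :: "nat \<Rightarrow> complex mat" and Ahat :: "nat \<Rightarrow> complex mat"
  assumes k: "k \<ge> 1"
    and t_pos: "\<forall>i \<in> {1..k}. t i \<ge> 1"
    and t_mono: "\<forall>i \<in> {1..<k}. t i \<ge> t (Suc i)"
    and E_dim: "\<forall>i \<in> {1..k}. E i \<in> carrier_mat (t i) (t i)"
    and E_ut: "\<forall>i \<in> {1..k}. upper_triangular (E i) \<and> invertible_mat (E i)"
    and Ahat_dim: "\<forall>i \<in> {1..<k}. Ahat i \<in> carrier_mat (t (Suc i)) (t (Suc i))"
    and Ahat_ut: "\<forall>i \<in> {1..<k}. upper_triangular (Ahat i) \<and> invertible_mat (Ahat i)"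
  shows "(\<forall>\<mu>. is_eigenvalue (pencil (A0 t k Ahat) (E0 t k E)) \<mu> \<longleftrightarrow> \<mu> = 0) \<and>
         (\<forall>N. is_right_minimal_basis (pencil (A0 t k Ahat) (E0 t k E)) N \<longrightarrow>
              maximal_root_polys (pencil (A0 t k Ahat) (E0 t k E)) N 0 (all_Qcols t k E Ahat))"
proof -
  interpret block_bidiagonal_pencil k t E Ahat
    using assms by (unfold_locales) auto
  show ?thesis
    using is_eigenvalue_pencil_iff right_minimal_basis_Nil maximal_root_polys_Qcols by auto
qed

end
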